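(* For every prime $p$ and $n\geq1$, the pseudovariety $\llbracket\mathbb{Z}_{p^n}\rrbracket$ is join irreducible and \[\operatorname{Excl}(\mathbb{Z}_{p^n})=\llbracket(x^{(p')^\omega})^{p^{n-1}}\approx x^\omega\rrbracket.\]
   Context: $\mathbb{Z}_m$ is the cyclic group of order $m$. A pseudovariety is a class of finite semigroups closed under finite direct products, subsemigroups and homomorphic images; $\llbracket S\rrbracket$ is the pseudovariety generated by $S$, and $\llbracket\Sigma\rrbracket$ the pseudovariety defined by pseudoidentities $\Sigma$. A pseudovariety $\mathbf{V}$ is join irreducible if for every set $\mathscr{X}$ of pseudovarieties, $\mathbf{V}\subseteq\bigvee\mathscr{X}$ implies $\mathbf{V}\subseteq\mathbf{X}$ for some $\mathbf{X}\in\mathscr{X}$; $\operatorname{Excl}(S)$ is the class of finite semigroups $T$ with $S\notin\llbracket T\rrbracket$. $x^\omega$ is the idempotent power. $p'$ denotes the set of all primes other than $p$; for a set $\pi=\{p_1,p_2,\dots\}$ of primes, $x^{\pi^\omega}$ is the limit in the free profinite semigroup on $\{x\}$ of $x^{(p_1\cdots p_k)^{k!}}$; for an element $s$ of a finite semigroup, $s^{\pi^\omega}$ generates the $\pi'$-primary component of the cyclic group generated by $s^{\omega+1}$ (so $s^{(p')^\omega}$ generates its $p$-primary component). *)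

theory Defs
  imports "HOL-Computational_Algebra.Primes" "HOL-Library.Infinite_Set" "HOL-Library.Nat_Bijection"
begin

text \<open>Finite semigroups are represented on the universe nat: a pair (carrier, multiplication).
  Every finite semigroup is isomorphic to one of this form, and all classes below are
  closed under isomorphism (via homomorphic images), so this loses no generality.\<close>

type_synonym sg = "nat set \<times> (nat \<Rightarrow> nat \<Rightarrow> nat)"

definition car :: "sg \<Rightarrow> nat set" where "car S = fst S"
definition mul :: "sg \<Rightarrow> nat \<Rightarrow> nat \<Rightarrow> nat" where "mul S = snd S"

definition fin_sg :: "sg \<Rightarrow> bool" where
  "fin_sg S \<longleftrightarrow> finite (car S) \<and> car S \<noteq> {}
     \<and> (\<forall>x\<in>car S. \<forall>y\<in>car S. mul S x y \<in> car S)
     \<and> (\<forall>x\<in>car S. \<forall>y\<in>car S. \<forall>z\<in>car S. mul S (mul S x y) z = mul S x (mul S y z))"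

definition FinSG :: "sg set" where "FinSG = {S. fin_sg S}"

definition sg_prod :: "sg \<Rightarrow> sg \<Rightarrow> sg" where
  "sg_prod S T = ((\<lambda>(a,b). prod_encode (a,b)) ` (car S \<times> car T),
     (\<lambda>u v. case (prod_decode u, prod_decode v) of ((a,b),(c,d)) \<Rightarrow>
        prod_encode (mul S a c, mul T b d)))"

definition is_hom_onto :: "(nat \<Rightarrow> nat) \<Rightarrow> sg \<Rightarrow> sg \<Rightarrow> bool" where
  "is_hom_onto f S T \<longleftrightarrow> f ` car S = car T
     \<and> (\<forall>x\<in>car S. \<forall>y\<in>car S. f (mul S x y) = mul T (f x) (f y))"

definition pseudovariety :: "sg set \<Rightarrow> bool" where
  "pseudovariety V \<longleftrightarrow> V \<subseteq> FinSG \<and> V \<noteq> {}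
     \<and> (\<forall>S\<in>V. \<forall>T\<in>V. sg_prod S T \<in> V)
     \<and> (\<forall>S\<in>V. \<forall>A. A \<subseteq> car S \<and> A \<noteq> {} \<and> (\<forall>x\<in>A. \<forall>y\<in>A. mul S x y \<in> A)
            \<longrightarrow> (A, mul S) \<in> V)
     \<and> (\<forall>S\<in>V. \<forall>T\<in>FinSG. (\<exists>f. is_hom_onto f S T) \<longrightarrow> T \<in> V)"

definition pv_gen :: "sg set \<Rightarrow> sg set" where
  "pv_gen C = \<Inter>{V. pseudovariety V \<and> C \<subseteq> V}"

definition pv_join :: "sg set set \<Rightarrow> sg set" where
  "pv_join X = pv_gen (\<Union>X)"

definition join_irreducible :: "sg set \<Rightarrow> bool" where
  "join_irreducible V \<longleftrightarrow>
     (\<forall>X. (\<forall>W\<in>X. pseudovariety W) \<longrightarrow> V \<subseteq> pv_join X \<longrightarrow> (\<exists>W\<in>X. V \<subseteq> W))"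

definition Excl :: "sg \<Rightarrow> sg set" where
  "Excl S = {T \<in> FinSG. S \<notin> pv_gen {T}}"

definition Zm :: "nat \<Rightarrow> sg" where
  "Zm m = ({0..<m}, \<lambda>a b. (a + b) mod m)"

text \<open>Powers s^k for k \<ge> 1 (k = 0 gives s as well, never used).\<close>
definition spow :: "sg \<Rightarrow> nat \<Rightarrow> nat \<Rightarrow> nat" where
  "spow S s k = ((mul S s) ^^ (k - 1)) s"

definition omega_pow :: "sg \<Rightarrow> nat \<Rightarrow> nat" where
  "omega_pow S s = (THE e. (\<exists>k\<ge>1. e = spow S s k) \<and> mul S e e = e)"

text \<open>For a set of primes \<pi> = {p_1 < p_2 < ...} (infinite), s^(\<pi>^\<omega>) is the limit of
  s^((p_1 \<cdots> p_k)^(k!)); in a finite (discrete) semigroup this means the eventual value.\<close>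
definition pi_exp :: "nat set \<Rightarrow> nat \<Rightarrow> nat" where
  "pi_exp \<pi> k = (\<Prod>i<k. enumerate \<pi> i) ^ fact k"

definition pi_omega_pow :: "nat set \<Rightarrow> sg \<Rightarrow> nat \<Rightarrow> nat" where
  "pi_omega_pow \<pi> S s = (THE y. \<forall>\<^sub>F k in sequentially. spow S s (pi_exp \<pi> k) = y)"

definition primes_except :: "nat \<Rightarrow> nat set" where
  "primes_except p = {q. prime q \<and> q \<noteq> p}"

definition pv_thm_eq :: "nat \<Rightarrow> nat \<Rightarrow> sg set" where
  "pv_thm_eq p n = {T \<in> FinSG. \<forall>s\<in>car T.
      spow T (pi_omega_pow (primes_except p) T s) (p ^ (n - 1)) = omega_pow T s}"

end

theory Submission
  imports Defs "HOL-Number_Theory.Number_Theory"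
begin

text \<open>Let r be the period of the monogenic subsemigroup generated by s and write \<open>r = p^a K\<close> with
  p not dividing K. The exponents \<open>(p_1 \<cdots> p_k)^(k!)\<close> are eventually divisible by K and congruent
  to 1 modulo \<open>p^a\<close>, so \<open>s^((p')^omega) = s^c\<close> with \<open>K | c\<close> and p not dividing c. Hence the
  pseudoidentity holds at s iff r divides \<open>c p^(n-1)\<close>, i.e. iff \<open>p^n\<close> does not divide r; and if
  \<open>p^n\<close> divides r, the powers of s beyond the index map onto \<open>Z_(p^n)\<close>. The property
  "\<open>s^(i + p^(n-1) K) = s^i\<close> for some i and some K prime to p" is preserved by products,
  subsemigroups and homomorphic images and fails for the generator of \<open>Z_(p^n)\<close>, so it defines
  \<open>Excl(Z_(p^n))\<close>, which is therefore a pseudovariety; and a semigroup whose Excl is a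
  pseudovariety generates a join irreducible one.\<close>

lemma car_pair [simp]: "car (A, m) = A"
  by (simp add: car_def)

lemma mul_pair [simp]: "mul (A, m) = m"
  by (simp add: mul_def)

lemma fin_sgD:
  assumes "fin_sg S"
  shows "finite (car S)" "car S \<noteq> {}"
    "\<And>x y. x \<in> car S \<Longrightarrow> y \<in> car S \<Longrightarrow> mul S x y \<in> car S"
    "\<And>x y z. x \<in> car S \<Longrightarrow> y \<in> car S \<Longrightarrow> z \<in> car S \<Longrightarrow>
       mul S (mul S x y) z = mul S x (mul S y z)"
  using assms unfolding fin_sg_def by blast+

lemma fin_sg_subsemigroup:
  assumes "fin_sg S" "A \<subseteq> car S" "A \<noteq> {}" "\<forall>x\<in>A. \<forall>y\<in>A. mul S x y \<in> A"
  shows "fin_sg (A, mul S)"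
  unfolding fin_sg_def car_pair mul_pair
proof (intro conjI ballI)
  show "finite A" using assms(2) fin_sgD(1)[OF assms(1)] finite_subset by blast
next
  fix x y z assume "x \<in> A" "y \<in> A" "z \<in> A"
  then show "mul S (mul S x y) z = mul S x (mul S y z)" using assms(2) fin_sgD(4)[OF assms(1)] by blast
qed (use assms in auto)

lemma car_sg_prod: "car (sg_prod S T) = (\<lambda>(a, b). prod_encode (a, b)) ` (car S \<times> car T)"
  by (simp add: sg_prod_def car_def)

lemma mul_sg_prod:
  "mul (sg_prod S T) (prod_encode (a, b)) (prod_encode (c, d)) = prod_encode (mul S a c, mul T b d)"
  by (simp add: sg_prod_def mul_def)

lemma fin_sg_sg_prod:
  assumes "fin_sg S" "fin_sg T"
  shows "fin_sg (sg_prod S T)"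
  unfolding fin_sg_def
proof (intro conjI ballI)
  show "finite (car (sg_prod S T))" "car (sg_prod S T) \<noteq> {}"
    using fin_sgD(1,2)[OF assms(1)] fin_sgD(1,2)[OF assms(2)] by (auto simp: car_sg_prod)
next
  fix x y assume "x \<in> car (sg_prod S T)" "y \<in> car (sg_prod S T)"
  then show "mul (sg_prod S T) x y \<in> car (sg_prod S T)"
    using fin_sgD(3)[OF assms(1)] fin_sgD(3)[OF assms(2)] by (auto simp: car_sg_prod mul_sg_prod)
next
  fix x y z assume "x \<in> car (sg_prod S T)" "y \<in> car (sg_prod S T)" "z \<in> car (sg_prod S T)"
  then show "mul (sg_prod S T) (mul (sg_prod S T) x y) z = mul (sg_prod S T) x (mul (sg_prod S T) y z)"
    using fin_sgD(4)[OF assms(1)] fin_sgD(4)[OF assms(2)] by (auto simp: car_sg_prod mul_sg_prod)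
qed

subsection \<open>Powers\<close>

lemma spow_1 [simp]: "spow S s (Suc 0) = s"
  by (simp add: spow_def)

lemma spow_Suc_Suc: "spow S s (Suc (Suc j)) = mul S s (spow S s (Suc j))"
  by (simp add: spow_def)

lemma spow_closed:
  assumes "fin_sg S" "s \<in> car S"
  shows "spow S s k \<in> car S"
proof -
  have "spow S s (Suc j) \<in> car S" for j
    by (induction j) (auto simp: spow_Suc_Suc fin_sgD[OF assms(1)] assms(2))
  then show ?thesis
    by (cases k) (auto simp: assms spow_def)
qed

lemma spow_add:
  assumes "fin_sg S" "s \<in> car S" "k \<ge> 1" "l \<ge> 1"
  shows "spow S s (k + l) = mul S (spow S s k) (spow S s l)"
proof -
  have "spow S s (Suc j + l) = mul S (spow S s (Suc j)) (spow S s l)" for j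
  proof (induction j)
    case 0
    then show ?case using assms(4) by (cases l) (auto simp: spow_Suc_Suc)
  next
    case (Suc j)
    have "spow S s (Suc (Suc j) + l) = mul S s (spow S s (Suc j + l))"
      using assms(4) by (cases l) (auto simp: spow_Suc_Suc)
    also have "\<dots> = mul S (mul S s (spow S s (Suc j))) (spow S s l)"
      using Suc fin_sgD(4)[OF assms(1,2) spow_closed[OF assms(1,2)] spow_closed[OF assms(1,2)]]
      by simp
    finally show ?case by (simp add: spow_Suc_Suc)
  qed
  then show ?thesis using assms(3) by (cases k) auto
qed

lemma spow_mult:
  assumes "fin_sg S" "s \<in> car S" "k \<ge> 1" "l \<ge> 1"
  shows "spow S (spow S s k) l = spow S s (k * l)"
proof -
  have "spow S (spow S s k) (Suc j) = spow S s (k * Suc j)" for j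
  proof (induction j)
    case (Suc j)
    then have "spow S (spow S s k) (Suc (Suc j)) = spow S s (k + k * Suc j)"
      using spow_add[OF assms(1-3), of "k * Suc j"] assms(3) by (simp add: spow_Suc_Suc)
    then show ?case by (simp add: algebra_simps)
  qed simp
  then show ?thesis using assms(4) by (cases l) auto
qed

lemma spow_hom:
  assumes "fin_sg S" "s \<in> car S" "is_hom_onto f S T"
  shows "f (spow S s k) = spow T (f s) k"
proof -
  have "f (spow S s (Suc j)) = spow T (f s) (Suc j)" for j
    using assms spow_closed[OF assms(1,2)]
    by (induction j) (auto simp: spow_Suc_Suc is_hom_onto_def)
  then show ?thesis by (cases k) (auto simp: spow_def)
qed

lemma spow_subsemigroup: "spow (A, mul S) s k = spow S s k"
  by (simp add: spow_def)

lemma spow_sg_prod: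
  "spow (sg_prod S T) (prod_encode (a, b)) k = prod_encode (spow S a k, spow T b k)"
proof -
  have "spow (sg_prod S T) (prod_encode (a, b)) (Suc j)
      = prod_encode (spow S a (Suc j), spow T b (Suc j))" for j
    by (induction j) (auto simp: spow_Suc_Suc mul_sg_prod)
  then show ?thesis by (cases k) (auto simp: spow_def)
qed

lemma spow_period_shift:
  assumes "fin_sg S" "s \<in> car S" "i \<ge> 1" "spow S s (i + q) = spow S s i" "m \<ge> i"
  shows "spow S s (m + t * q) = spow S s m"
proof -
  have step: "spow S s (m + q) = spow S s m" if "m \<ge> i" for m
  proof (cases "m = i")
    case False
    then have "m = (m - i) + i" "m - i \<ge> 1" using that by auto
    then show ?thesis
      using assms(3,4) spow_add[OF assms(1,2), of "m - i" "i + q"] spow_add[OF assms(1,2), of "m - i" i]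
      by (metis add.assoc le_add1 order_trans)
  qed (use assms in simp)
  show ?thesis
  proof (induction t)
    case (Suc t)
    then show ?case
      using step[of "m + t * q"] assms(5) by (simp add: algebra_simps)
  qed simp
qed

subsection \<open>Index and period\<close>

text \<open>Here \<open>i\<close> need only be at least the index of \<open>s\<close>; \<open>r\<close> is then the period.\<close>

definition index_period :: "sg \<Rightarrow> nat \<Rightarrow> nat \<Rightarrow> nat \<Rightarrow> bool" where
  "index_period S s i r \<longleftrightarrow> i \<ge> 1 \<and> r \<ge> 1 \<and>
     (\<forall>k\<ge>i. \<forall>l\<ge>i. spow S s k = spow S s l \<longleftrightarrow> [k = l] (mod r))"

lemma spow_repeats:
  assumes "fin_sg S" "s \<in> car S"
  obtains i q where "i \<ge> 1" "q \<ge> 1" "spow S s (i + q) = spow S s i"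
proof -
  let ?N = "{1..card (car S) + 1}"
  have "\<not> inj_on (spow S s) ?N"
  proof
    assume "inj_on (spow S s) ?N"
    then have "card (spow S s ` ?N) = card (car S) + 1"
      by (simp add: card_image)
    moreover have "spow S s ` ?N \<subseteq> car S"
      using spow_closed[OF assms] by blast
    ultimately show False
      using card_mono[OF fin_sgD(1)[OF assms(1)], of "spow S s ` ?N"] by simp
  qed
  then obtain k l where kl: "k \<in> ?N" "l \<in> ?N" "k \<noteq> l" "spow S s k = spow S s l"
    unfolding inj_on_def by blast
  show thesis
  proof (cases "k < l")
    case True
    then show thesis using that[of k "l - k"] kl by auto
  next
    case False
    then show thesis using that[of l "k - l"] kl by auto
  qed
qed

lemma spow_shift_eq_iff_least_period:
  assumes "fin_sg S" "s \<in> car S" "i \<ge> 1" "r \<ge> 1" "spow S s (i + r) = spow S s i"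
    and r_least: "\<And>d. d \<ge> 1 \<Longrightarrow> spow S s (i + d) = spow S s i \<Longrightarrow> r \<le> d"
    and "k \<ge> i"
  shows "spow S s (k + d) = spow S s k \<longleftrightarrow> r dvd d"
proof
  have shift: "spow S s (m + t * r) = spow S s m" if "m \<ge> i" for m t
    using spow_period_shift[OF assms(1-3,5) that] .
  show "spow S s (k + d) = spow S s k" if "r dvd d"
    using that shift[OF assms(7)] by (auto simp: mult.commute)
  assume kd: "spow S s (k + d) = spow S s k"
  have "k \<le> i + k * r"
    using assms(4) by (metis le_add2 mult_le_mono2 mult.commute mult_1_right order_trans)
  then have "spow S s ((i + k * r) + 1 * d) = spow S s (i + k * r)"
    using spow_period_shift[OF assms(1,2) _ kd] assms(3,7) by (metis le_trans)
  then have "spow S s (i + d) = spow S s i"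
    using shift[of "i + d" k] shift[of i k] by (simp add: algebra_simps)
  moreover have "spow S s (i + d mod r + (d div r) * r) = spow S s (i + d mod r)"
    by (rule shift) simp
  ultimately have "spow S s (i + d mod r) = spow S s i"
    by (simp add: add.assoc)
  moreover have "d mod r < r"
    using assms(4) by simp
  ultimately have "d mod r = 0"
    using r_least[of "d mod r"] by fastforce
  then show "r dvd d" by auto
qed

lemma index_period_exists:
  assumes "fin_sg S" "s \<in> car S"
  obtains i r where "index_period S s i r"
proof -
  obtain i q where iq: "i \<ge> 1" "q \<ge> 1" "spow S s (i + q) = spow S s i"
    using spow_repeats[OF assms] by blast
  define r where "r = (LEAST r. r \<ge> 1 \<and> spow S s (i + r) = spow S s i)"
  have r: "r \<ge> 1" "spow S s (i + r) = spow S s i"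
    using LeastI[of "\<lambda>r. r \<ge> 1 \<and> spow S s (i + r) = spow S s i" q] iq unfolding r_def by auto
  have r_least: "r \<le> d" if "d \<ge> 1" "spow S s (i + d) = spow S s i" for d
    using Least_le[of "\<lambda>r. r \<ge> 1 \<and> spow S s (i + r) = spow S s i" d] that unfolding r_def by auto
  have "spow S s k = spow S s l \<longleftrightarrow> [k = l] (mod r)" if "k \<ge> i" "l \<ge> i" "k \<le> l" for k l
    using spow_shift_eq_iff_least_period[OF assms iq(1) r r_least that(1), of "l - k"] that(3)
    by (simp add: cong_sym_eq[of k] cong_altdef_nat eq_commute[of "spow S s k"])
  then have "\<forall>k\<ge>i. \<forall>l\<ge>i. spow S s k = spow S s l \<longleftrightarrow> [k = l] (mod r)"
    by (metis cong_sym_eq nat_le_linear)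
  then show thesis
    using that iq(1) r(1) unfolding index_period_def by blast
qed

subsection \<open>Arithmetic\<close>

lemma prime_power_not_dvd_pred_power_mult:
  fixes p K :: nat
  assumes "prime p" "n \<ge> 1" "\<not> p dvd K"
  shows "\<not> p ^ n dvd p ^ (n - 1) * K"
proof
  assume "p ^ n dvd p ^ (n - 1) * K"
  then have "p ^ (n - 1) * p dvd p ^ (n - 1) * K"
    using assms(2) by (metis Suc_diff_1 less_le_trans zero_less_one power_Suc2)
  then show False
    using assms by (simp add: prime_gt_0_nat)
qed

lemma dvd_pred_prime_power_mult_iff:
  fixes p K c r :: nat
  assumes "prime p" "n \<ge> 1" "r = p ^ a * K" "\<not> p dvd K" "K dvd c" "\<not> p dvd c"
  shows "r dvd p ^ (n - 1) * c \<longleftrightarrow> \<not> p ^ n dvd r"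
proof (cases "a < n")
  case True
  then have "p ^ a dvd p ^ (n - 1)"
    by (simp add: le_imp_power_dvd)
  then have "r dvd p ^ (n - 1) * c"
    using assms(3,5) by (simp add: mult_dvd_mono)
  moreover have "\<not> p ^ n dvd r"
  proof
    assume "p ^ n dvd r"
    moreover have "p ^ Suc a dvd p ^ n"
      by (rule le_imp_power_dvd) (use True in simp)
    ultimately have "p ^ Suc a dvd p ^ a * K"
      using assms(3) dvd_trans by blast
    then show False
      using prime_power_not_dvd_pred_power_mult[OF assms(1) _ assms(4), of "Suc a"] by simp
  qed
  ultimately show ?thesis by simp
next
  case False
  then have "p ^ n dvd r"
    using assms(3) by (simp add: le_imp_power_dvd dvd_mult2)
  then show ?thesis
    using prime_power_not_dvd_pred_power_mult[OF assms(1,2,6)] dvd_trans by blast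
qed

lemma dvd_power_if_prime_factors_dvd:
  fixes K P :: nat
  shows "K \<noteq> 0 \<Longrightarrow> (\<And>q. prime q \<Longrightarrow> q dvd K \<Longrightarrow> q dvd P) \<Longrightarrow> K dvd P ^ K"
proof (induction K rule: less_induct)
  case (less K)
  show ?case
  proof (cases "K = 1")
    case False
    then obtain q where q: "prime q" "q dvd K"
      using prime_factor_nat by blast
    from q(2) obtain K' where K': "K = q * K'" by (rule dvdE)
    then have "K' \<noteq> 0" "K' < K"
      using less.prems(1) prime_ge_2_nat[OF q(1)] by auto
    then have "K' dvd P ^ K'"
      using less.IH less.prems(2) K' by (metis dvd_mult)
    then have "K dvd P * P ^ K'"
      using K' less.prems(2) q by (simp add: mult_dvd_mono)
    moreover have "Suc K' \<le> K"
      using \<open>K' < K\<close> by simp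
    ultimately show ?thesis
      by (metis power_Suc dvd_trans le_imp_power_dvd)
  qed simp
qed

lemma infinite_primes_except: "infinite (primes_except p)"
proof
  assume "finite (primes_except p)"
  then have "finite (insert p (primes_except p))" by simp
  moreover have "{q::nat. prime q} \<subseteq> insert p (primes_except p)"
    unfolding primes_except_def by auto
  ultimately show False
    using primes_infinite finite_subset by blast
qed

lemma enumerate_primes_except:
  "prime (enumerate (primes_except p) j)" "enumerate (primes_except p) j \<noteq> p"
  using enumerate_in_set[OF infinite_primes_except, of p j] unfolding primes_except_def by auto

lemma coprime_pi_exp_primes_except:
  assumes "prime p"
  shows "coprime (pi_exp (primes_except p) k) p"
proof -
  have "coprime (enumerate (primes_except p) j) p" for j
    by (metis assms enumerate_primes_except primes_coprime)
  then show ?thesis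
    unfolding pi_exp_def by (simp add: prod_coprime_left)
qed

lemma eventually_dvd_pi_exp_primes_except:
  assumes "prime p" "\<not> p dvd K"
  shows "\<forall>\<^sub>F k in sequentially. K dvd pi_exp (primes_except p) k"
proof -
  let ?P = "\<lambda>k. \<Prod>j<k. enumerate (primes_except p) j"
  have "K \<noteq> 0"
    using assms(2) by (metis dvd_0_right)
  have "K dvd pi_exp (primes_except p) k" if "k > K" for k
  proof -
    have "q dvd ?P k" if "prime q" "q dvd K" for q
    proof -
      have "q \<in> primes_except p"
        using that assms(2) unfolding primes_except_def by auto
      then obtain j where j: "q = enumerate (primes_except p) j"
        using range_enumerate[OF infinite_primes_except] by blast
      have "j \<le> q"
        unfolding j by (rule strict_mono_imp_increasing[OF strict_mono_enumerate[OF infinite_primes_except]])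
      moreover have "q \<le> K"
        using that \<open>K \<noteq> 0\<close> by (simp add: dvd_imp_le)
      ultimately have "j < k"
        using \<open>k > K\<close> by linarith
      then show ?thesis
        unfolding j by (intro dvd_prodI) auto
    qed
    then have "K dvd ?P k ^ K"
      using dvd_power_if_prime_factors_dvd \<open>K \<noteq> 0\<close> by blast
    moreover have "?P k ^ K dvd ?P k ^ fact k"
      using fact_ge_self[of k] that by (intro le_imp_power_dvd) linarith
    ultimately show ?thesis
      unfolding pi_exp_def by (rule dvd_trans)
  qed
  then show ?thesis
    unfolding eventually_sequentially by (meson Suc_le_eq)
qed

lemma eventually_pi_exp_primes_except_ge:
  assumes "prime p"
  shows "\<forall>\<^sub>F k in sequentially. pi_exp (primes_except p) k \<ge> m"
proof -
  have "\<not> p dvd p * m + 1"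
    using assms by (metis dvd_add_right_iff dvd_triv_left nat_dvd_1_iff_1 not_prime_1)
  then have "\<forall>\<^sub>F k in sequentially. p * m + 1 dvd pi_exp (primes_except p) k"
    by (rule eventually_dvd_pi_exp_primes_except[OF assms])
  moreover have "pi_exp (primes_except p) k > 0" for k
    unfolding pi_exp_def using enumerate_primes_except(1) by (simp add: prime_gt_0_nat prod_pos)
  moreover have "m \<le> p * m + 1"
    using prime_gt_0_nat[OF assms] mult_le_mono1[of 1 p m] by linarith
  ultimately show ?thesis
    by (elim eventually_mono) (meson dvd_imp_le le_trans)
qed

lemma eventually_pi_exp_primes_except_cong_1:
  assumes "prime p"
  shows "\<forall>\<^sub>F k in sequentially. [pi_exp (primes_except p) k = 1] (mod p ^ a)"
proof -
  let ?P = "\<lambda>k. \<Prod>j<k. enumerate (primes_except p) j"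
  have "[pi_exp (primes_except p) k = 1] (mod p ^ a)" if k: "k \<ge> totient (p ^ a)" for k
  proof -
    have "coprime (?P k) (p ^ a)"
      using coprime_pi_exp_primes_except[OF assms, of k] unfolding pi_exp_def by simp
    then have "[?P k ^ totient (p ^ a) = 1] (mod p ^ a)"
      by (rule euler_theorem)
    moreover have "totient (p ^ a) \<ge> 1"
      using assms by (simp add: prime_gt_0_nat Suc_leI)
    then obtain m where "fact k = totient (p ^ a) * m"
      using dvd_fact[OF _ k] by blast
    ultimately show ?thesis
      unfolding pi_exp_def by (metis cong_pow power_mult power_one)
  qed
  then show ?thesis
    unfolding eventually_sequentially by blast
qed

subsection \<open>A monogenic subsemigroup\<close>

text \<open>Equivalent to \<open>p^n\<close> not dividing the period of s (\<open>monogenic.small_p_period_iff\<close>), but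
  stated by a witness, which transports along products and homomorphic images.\<close>

definition small_p_period :: "nat \<Rightarrow> nat \<Rightarrow> sg \<Rightarrow> nat \<Rightarrow> bool" where
  "small_p_period p n S s \<longleftrightarrow>
     (\<exists>i K. i \<ge> 1 \<and> \<not> p dvd K \<and> spow S s (i + p ^ (n - 1) * K) = spow S s i)"

locale monogenic =
  fixes S :: sg and s i r :: nat
  assumes fin: "fin_sg S" and gen: "s \<in> car S" and index_period: "index_period S s i r"
begin

lemma index_ge_1: "i \<ge> 1" and period_ge_1: "r \<ge> 1"
  using index_period unfolding index_period_def by auto

lemma spow_eq_iff: "k \<ge> i \<Longrightarrow> l \<ge> i \<Longrightarrow> spow S s k = spow S s l \<longleftrightarrow> [k = l] (mod r)"
  using index_period unfolding index_period_def by blast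

lemma omega_pow_eq: "omega_pow S s = spow S s (i * r)"
  unfolding omega_pow_def
proof (rule the_equality)
  have "i * r \<ge> i" "i * r \<ge> 1"
    using index_ge_1 period_ge_1 by simp_all
  then have "mul S (spow S s (i * r)) (spow S s (i * r)) = spow S s (i * r)"
    using spow_add[OF fin gen, of "i * r" "i * r", symmetric] spow_eq_iff[of "i * r + i * r" "i * r"]
    by (simp add: cong_def)
  then show "(\<exists>k\<ge>1. spow S s (i * r) = spow S s k) \<and>
      mul S (spow S s (i * r)) (spow S s (i * r)) = spow S s (i * r)"
    using \<open>i * r \<ge> 1\<close> by blast
next
  fix e assume "(\<exists>k\<ge>1. e = spow S s k) \<and> mul S e e = e"
  then obtain k where k: "k \<ge> 1" "e = spow S s k" "mul S e e = e" by blast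
  have multiples: "spow S s (Suc j * k) = e" for j
  proof (induction j)
    case (Suc j)
    then show ?case
      using spow_add[OF fin gen k(1), of "Suc j * k"] k by (simp add: add.commute)
  qed (use k in simp)
  have "spow S s (i * k) = e" "spow S s (2 * i * k) = e"
    using multiples[of "i - 1"] multiples[of "2 * i - 1"] index_ge_1 by simp_all
  moreover have "i * k \<ge> i" "2 * i * k \<ge> i"
    using k(1) by simp_all
  ultimately have "[i * k = 2 * i * k] (mod r)"
    using spow_eq_iff by metis
  then have "r dvd i * k"
    using cong_altdef_nat[of "i * k" "2 * i * k" r] by (simp add: cong_sym_eq)
  then have "spow S s (i * k) = spow S s (i * r)"
    using spow_eq_iff \<open>i * k \<ge> i\<close> index_ge_1 period_ge_1 by (simp add: cong_def)
  then show "e = spow S s (i * r)"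
    using \<open>spow S s (i * k) = e\<close> by simp
qed

lemma small_p_period_iff:
  assumes "prime p" "n \<ge> 1"
  shows "small_p_period p n S s \<longleftrightarrow> \<not> p ^ n dvd r"
proof
  assume "small_p_period p n S s"
  then obtain i' K where i'K: "i' \<ge> 1" "\<not> p dvd K" "spow S s (i' + p ^ (n - 1) * K) = spow S s i'"
    unfolding small_p_period_def by blast
  have "spow S s (max i i' + 1 * (p ^ (n - 1) * K)) = spow S s (max i i')"
    by (rule spow_period_shift[OF fin gen i'K(1,3)]) simp
  then have "r dvd p ^ (n - 1) * K"
    using spow_eq_iff[of "max i i' + p ^ (n - 1) * K" "max i i'"] cong_altdef_nat by simp
  then show "\<not> p ^ n dvd r"
    using prime_power_not_dvd_pred_power_mult[OF assms i'K(2)] dvd_trans by blast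
next
  assume "\<not> p ^ n dvd r"
  obtain a K where aK: "r = p ^ a * K" "\<not> p dvd K"
    using multiplicity_decompose'[of r p] period_ge_1 assms(1) by (metis not_one_le_zero not_prime_unit)
  then have "r dvd p ^ (n - 1) * K"
    using dvd_pred_prime_power_mult_iff[OF assms aK] \<open>\<not> p ^ n dvd r\<close> by simp
  then have "spow S s (i + p ^ (n - 1) * K) = spow S s i"
    using spow_eq_iff[of "i + p ^ (n - 1) * K" i] cong_altdef_nat by simp
  then show "small_p_period p n S s"
    unfolding small_p_period_def using index_ge_1 aK(2) by blast
qed

text \<open>The sequence \<open>s^(pi_exp (p') k)\<close> becomes constant once its exponents exceed the index and
  are divisible by K and congruent to 1 modulo \<open>p^a\<close>, as these conditions fix them modulo
  \<open>r = p^a K\<close>.\<close>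

lemma pi_omega_pow_primes_except:
  assumes "prime p" "r = p ^ a * K" "\<not> p dvd K"
  obtains c where "c \<ge> i" "K dvd c" "\<not> p dvd c"
    "pi_omega_pow (primes_except p) S s = spow S s c"
proof -
  let ?N = "pi_exp (primes_except p)"
  have "\<forall>\<^sub>F k in sequentially. ?N k \<ge> i \<and> K dvd ?N k \<and> [?N k = 1] (mod p ^ a)"
    using eventually_pi_exp_primes_except_ge eventually_dvd_pi_exp_primes_except
      eventually_pi_exp_primes_except_cong_1 assms by (intro eventually_conj) blast+
  then obtain k0 where k0: "\<And>k. k \<ge> k0 \<Longrightarrow> ?N k \<ge> i \<and> K dvd ?N k \<and> [?N k = 1] (mod p ^ a)"
    unfolding eventually_sequentially by blast
  have stable: "spow S s (?N k) = spow S s (?N k0)" if "k \<ge> k0" for k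
  proof -
    have "[?N k = ?N k0] (mod p ^ a)"
      using k0[OF that] k0[of k0] by (meson cong_sym cong_trans order_refl)
    moreover have "[?N k = ?N k0] (mod K)"
      using k0[OF that] k0[of k0] by (metis cong_0_iff cong_sym cong_trans order_refl)
    moreover have "coprime (p ^ a) K"
      using assms(1,3) by (simp add: prime_imp_coprime)
    ultimately have "[?N k = ?N k0] (mod r)"
      using coprime_cong_mult_nat assms(2) by simp
    then show ?thesis
      using spow_eq_iff k0[OF that] k0[of k0] by simp
  qed
  have "pi_omega_pow (primes_except p) S s = spow S s (?N k0)"
    unfolding pi_omega_pow_def
  proof (rule the_equality)
    show "\<forall>\<^sub>F k in sequentially. spow S s (?N k) = spow S s (?N k0)"
      unfolding eventually_sequentially using stable by blast
  next
    fix y assume "\<forall>\<^sub>F k in sequentially. spow S s (?N k) = y"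
    then obtain k1 where "\<And>k. k \<ge> k1 \<Longrightarrow> spow S s (?N k) = y"
      unfolding eventually_sequentially by blast
    then show "y = spow S s (?N k0)"
      using stable[of "max k0 k1"] by simp
  qed
  moreover have "\<not> p dvd ?N k0"
    using coprime_pi_exp_primes_except[OF assms(1)] assms(1)
    by (metis coprime_commute not_prime_unit coprime_absorb_left)
  ultimately show thesis
    using that k0[of k0] by blast
qed

lemma pseudoidentity_iff:
  assumes "prime p" "n \<ge> 1"
  shows "spow S (pi_omega_pow (primes_except p) S s) (p ^ (n - 1)) = omega_pow S s
    \<longleftrightarrow> \<not> p ^ n dvd r"
proof -
  obtain a K where aK: "r = p ^ a * K" "\<not> p dvd K"
    using multiplicity_decompose'[of r p] period_ge_1 assms(1) by (metis not_one_le_zero not_prime_unit)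
  obtain c where c: "c \<ge> i" "K dvd c" "\<not> p dvd c"
    and pi_omega: "pi_omega_pow (primes_except p) S s = spow S s c"
    using pi_omega_pow_primes_except[OF assms(1) aK] .
  have "c \<ge> 1" "p ^ (n - 1) \<ge> 1"
    using c(1) index_ge_1 assms(1) by (simp_all add: prime_gt_0_nat Suc_leI)
  then have "spow S (pi_omega_pow (primes_except p) S s) (p ^ (n - 1)) = spow S s (p ^ (n - 1) * c)"
    using pi_omega spow_mult[OF fin gen] by (simp add: mult.commute)
  moreover have "p ^ (n - 1) * c \<ge> i" "i * r \<ge> i"
    using c(1) \<open>p ^ (n - 1) \<ge> 1\<close> period_ge_1 mult_le_mono[of 1 "p ^ (n - 1)" i c] by simp_all
  ultimately have "spow S (pi_omega_pow (primes_except p) S s) (p ^ (n - 1)) = omega_pow S s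
      \<longleftrightarrow> r dvd p ^ (n - 1) * c"
    using omega_pow_eq spow_eq_iff by (simp add: cong_def mod_eq_0_iff_dvd)
  also have "\<dots> \<longleftrightarrow> \<not> p ^ n dvd r"
    by (rule dvd_pred_prime_power_mult_iff[OF assms aK c(2,3)])
  finally show ?thesis .
qed

lemma hom_onto_Zm:
  assumes "m dvd r"
  obtains A f where "A \<subseteq> car S" "A \<noteq> {}" "\<forall>x\<in>A. \<forall>y\<in>A. mul S x y \<in> A"
    "is_hom_onto f (A, mul S) (Zm m)"
proof -
  define A where "A = {spow S s k | k. k \<ge> i}"
  define f where "f x = (SOME k. k \<ge> i \<and> x = spow S s k) mod m" for x
  have f_spow: "f (spow S s k) = k mod m" if "k \<ge> i" for k
  proof -
    have "\<exists>k'. k' \<ge> i \<and> spow S s k = spow S s k'"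
      using that by blast
    then have "[k = (SOME k'. k' \<ge> i \<and> spow S s k = spow S s k')] (mod r)"
      using spow_eq_iff that by (metis (mono_tags, lifting) someI_ex)
    then show ?thesis
      unfolding f_def using assms by (metis cong_def cong_dvd_modulus_nat)
  qed
  have mul_spow: "mul S (spow S s k) (spow S s l) = spow S s (k + l)" if "k \<ge> i" "l \<ge> i" for k l
    using spow_add[OF fin gen, of k l] that index_ge_1 by simp
  have "m > 0"
    using assms period_ge_1 by (metis dvd_0_left_iff not_one_le_zero neq0_conv)
  have "f ` A = {0..<m}"
  proof
    show "f ` A \<subseteq> {0..<m}"
      unfolding A_def using f_spow \<open>m > 0\<close> by auto
    show "{0..<m} \<subseteq> f ` A"
    proof
      fix j assume "j \<in> {0..<m}"
      moreover have "i \<le> i * m + j"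
        using \<open>m > 0\<close> by (simp add: Suc_leI trans_le_add1)
      ultimately have "f (spow S s (i * m + j)) = j" "spow S s (i * m + j) \<in> A"
        using f_spow[of "i * m + j"] unfolding A_def by auto
      then show "j \<in> f ` A"
        by (metis image_eqI)
    qed
  qed
  moreover have "\<forall>x\<in>A. \<forall>y\<in>A. f (mul S x y) = mul (Zm m) (f x) (f y)"
    unfolding A_def Zm_def using mul_spow f_spow by (auto simp: mod_add_eq)
  ultimately have "is_hom_onto f (A, mul S) (Zm m)"
    unfolding is_hom_onto_def by (simp add: Zm_def car_def)
  moreover have "A \<subseteq> car S" "A \<noteq> {}" "\<forall>x\<in>A. \<forall>y\<in>A. mul S x y \<in> A"
    unfolding A_def using spow_closed[OF fin gen] mul_spow by fastforce+
  ultimately show thesis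
    using that by blast
qed

end

lemma monogenic_exists:
  assumes "fin_sg S" "s \<in> car S"
  obtains i r where "monogenic S s i r"
proof -
  obtain i r where "index_period S s i r"
    using index_period_exists[OF assms] .
  then show thesis
    by (rule that[OF monogenic.intro[OF assms]])
qed

subsection \<open>Cyclic groups\<close>

lemma Zm_in_FinSG: "m \<ge> 1 \<Longrightarrow> Zm m \<in> FinSG"
  unfolding FinSG_def fin_sg_def Zm_def car_def mul_def
  by (auto simp: mod_add_left_eq mod_add_right_eq add.assoc)

lemma spow_Zm: "a < m \<Longrightarrow> spow (Zm m) a (Suc j) = (Suc j * a) mod m"
  by (induction j) (simp_all add: spow_Suc_Suc Zm_def mod_add_right_eq add.commute)

lemma monogenic_Zm_1:
  assumes "1 < m"
  shows "monogenic (Zm m) 1 1 m"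
proof
  show "fin_sg (Zm m)"
    using Zm_in_FinSG assms unfolding FinSG_def by simp
  show "1 \<in> car (Zm m)"
    using assms by (simp add: Zm_def car_def)
  have "spow (Zm m) 1 k = k mod m" if "k \<ge> 1" for k
    using spow_Zm[OF assms, of "k - 1"] that by simp
  then show "index_period (Zm m) 1 1 m"
    using assms unfolding index_period_def cong_def by simp
qed

lemma Zm_prime_power_not_small_p_period:
  assumes "prime p" "n \<ge> 1"
  shows "\<not> small_p_period p n (Zm (p ^ n)) 1"
proof -
  have "1 < p ^ n"
    using assms one_less_power[of p n] prime_gt_1_nat by simp
  then show ?thesis
    using monogenic.small_p_period_iff[OF monogenic_Zm_1 assms] by simp
qed

subsection \<open>Pseudovarieties\<close>

lemma pv_gen_least: "pseudovariety V \<Longrightarrow> C \<subseteq> V \<Longrightarrow> pv_gen C \<subseteq> V"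
  unfolding pv_gen_def by auto

lemma subset_pv_gen: "C \<subseteq> pv_gen C"
  unfolding pv_gen_def by auto

lemma divisor_in_pv_gen:
  assumes "A \<subseteq> car T" "A \<noteq> {}" "\<forall>x\<in>A. \<forall>y\<in>A. mul T x y \<in> A"
    and "is_hom_onto f (A, mul T) S" "S \<in> FinSG"
  shows "S \<in> pv_gen {T}"
  unfolding pv_gen_def
proof
  fix V assume "V \<in> {V. pseudovariety V \<and> {T} \<subseteq> V}"
  then have "pseudovariety V" "(A, mul T) \<in> V"
    using assms(1-3) unfolding pseudovariety_def by auto
  then show "S \<in> V"
    using assms(4,5) unfolding pseudovariety_def by blast
qed

lemma Excl_eqI:
  assumes "pseudovariety V" "S \<notin> V"
    and "\<And>T. T \<in> FinSG \<Longrightarrow> T \<notin> V \<Longrightarrow> S \<in> pv_gen {T}"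
  shows "Excl S = V"
proof
  show "Excl S \<subseteq> V"
    unfolding Excl_def using assms(3) by blast
  show "V \<subseteq> Excl S"
    unfolding Excl_def using assms(1,2) pv_gen_least[OF assms(1)]
    by (auto simp: pseudovariety_def)
qed

text \<open>Every pseudovariety W of a join either contains S or lies inside \<open>Excl S\<close>.\<close>

lemma join_irreducible_pv_gen:
  assumes "pseudovariety (Excl S)"
  shows "join_irreducible (pv_gen {S})"
  unfolding join_irreducible_def
proof (intro allI impI)
  fix X assume X: "\<forall>W\<in>X. pseudovariety W" and join: "pv_gen {S} \<subseteq> pv_join X"
  show "\<exists>W\<in>X. pv_gen {S} \<subseteq> W"
  proof (rule ccontr)
    assume none: "\<not> (\<exists>W\<in>X. pv_gen {S} \<subseteq> W)"
    have "W \<subseteq> Excl S" if "W \<in> X" for W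
    proof
      fix T assume "T \<in> W"
      have W: "pseudovariety W"
        using X that by blast
      then have "S \<notin> W"
        using none pv_gen_least[of W "{S}"] that by blast
      moreover have "pv_gen {T} \<subseteq> W" "T \<in> FinSG"
        using pv_gen_least[OF W] W \<open>T \<in> W\<close> unfolding pseudovariety_def by auto
      ultimately show "T \<in> Excl S"
        unfolding Excl_def by blast
    qed
    then have "pv_join X \<subseteq> Excl S"
      unfolding pv_join_def by (intro pv_gen_least[OF assms]) blast
    moreover have "S \<in> pv_join X"
      using join subset_pv_gen by blast
    ultimately show False
      using subset_pv_gen[of "{S}"] unfolding Excl_def by blast
  qed
qed

subsection \<open>The pseudovariety \<open>Excl(Z_(p^n))\<close>\<close>

definition Small_p_period :: "nat \<Rightarrow> nat \<Rightarrow> sg set" where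
  "Small_p_period p n = {T \<in> FinSG. \<forall>s\<in>car T. small_p_period p n T s}"

lemma Zm_1_in_Small_p_period:
  assumes "prime p"
  shows "Zm 1 \<in> Small_p_period p n"
proof -
  have "spow (Zm 1) 0 (Suc j) = 0" for j
    using spow_Zm[of 0 1 j] by simp
  moreover have "\<not> p dvd 1"
    using assms not_prime_1 by auto
  ultimately have "small_p_period p n (Zm 1) 0"
    unfolding small_p_period_def by (metis add_Suc_shift le_add1 plus_1_eq_Suc)
  moreover have "car (Zm 1) = {0}"
    by (simp add: Zm_def car_def)
  ultimately show ?thesis
    unfolding Small_p_period_def using Zm_in_FinSG[of 1] by simp
qed

lemma small_p_period_sg_prod:
  assumes "prime p" "fin_sg S" "fin_sg T" "a \<in> car S" "b \<in> car T"
    and "small_p_period p n S a" "small_p_period p n T b"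
  shows "small_p_period p n (sg_prod S T) (prod_encode (a, b))"
proof -
  obtain i1 K1 where 1: "i1 \<ge> 1" "\<not> p dvd K1" "spow S a (i1 + p ^ (n - 1) * K1) = spow S a i1"
    using assms(6) unfolding small_p_period_def by blast
  obtain i2 K2 where 2: "i2 \<ge> 1" "\<not> p dvd K2" "spow T b (i2 + p ^ (n - 1) * K2) = spow T b i2"
    using assms(7) unfolding small_p_period_def by blast
  have "spow S a (max i1 i2 + K2 * (p ^ (n - 1) * K1)) = spow S a (max i1 i2)"
    by (rule spow_period_shift[OF assms(2,4) 1(1,3)]) simp
  moreover have "spow T b (max i1 i2 + K1 * (p ^ (n - 1) * K2)) = spow T b (max i1 i2)"
    by (rule spow_period_shift[OF assms(3,5) 2(1,3)]) simp
  ultimately have "spow (sg_prod S T) (prod_encode (a, b)) (max i1 i2 + p ^ (n - 1) * (K1 * K2))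
      = spow (sg_prod S T) (prod_encode (a, b)) (max i1 i2)"
    by (simp add: spow_sg_prod algebra_simps)
  moreover have "\<not> p dvd K1 * K2"
    using 1(2) 2(2) assms(1) by (simp add: prime_dvd_mult_iff)
  moreover have "max i1 i2 \<ge> 1"
    using 1(1) by simp
  ultimately show ?thesis
    unfolding small_p_period_def by blast
qed

lemma small_p_period_hom_image:
  assumes "fin_sg S" "s \<in> car S" "is_hom_onto f S T" "small_p_period p n S s"
  shows "small_p_period p n T (f s)"
  using assms(4) spow_hom[OF assms(1-3)] unfolding small_p_period_def by metis

lemma pseudovariety_Small_p_period:
  assumes "prime p"
  shows "pseudovariety (Small_p_period p n)"
  unfolding pseudovariety_def
proof (intro conjI ballI allI impI)
  show "Small_p_period p n \<subseteq> FinSG"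
    unfolding Small_p_period_def by auto
  show "Small_p_period p n \<noteq> {}"
    using Zm_1_in_Small_p_period[OF assms] by blast
next
  fix S T assume "S \<in> Small_p_period p n" "T \<in> Small_p_period p n"
  then have S: "fin_sg S" "\<forall>a\<in>car S. small_p_period p n S a"
    and T: "fin_sg T" "\<forall>b\<in>car T. small_p_period p n T b"
    unfolding Small_p_period_def FinSG_def by auto
  have "small_p_period p n (sg_prod S T) x" if "x \<in> car (sg_prod S T)" for x
    using that small_p_period_sg_prod[OF assms S(1) T(1)] S(2) T(2) by (auto simp: car_sg_prod)
  then show "sg_prod S T \<in> Small_p_period p n"
    using fin_sg_sg_prod[OF S(1) T(1)] unfolding Small_p_period_def FinSG_def by blast
next
  fix S A assume "S \<in> Small_p_period p n"
    and "A \<subseteq> car S \<and> A \<noteq> {} \<and> (\<forall>x\<in>A. \<forall>y\<in>A. mul S x y \<in> A)"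
  then have "fin_sg (A, mul S)" "\<forall>a\<in>A. small_p_period p n (A, mul S) a"
    using fin_sg_subsemigroup unfolding Small_p_period_def FinSG_def small_p_period_def
      spow_subsemigroup by blast+
  then show "(A, mul S) \<in> Small_p_period p n"
    unfolding Small_p_period_def FinSG_def by simp
next
  fix S T assume "S \<in> Small_p_period p n" "T \<in> FinSG" "\<exists>f. is_hom_onto f S T"
  then obtain f where f: "is_hom_onto f S T" and S: "fin_sg S" "\<forall>s\<in>car S. small_p_period p n S s"
    by (auto simp: Small_p_period_def FinSG_def)
  have "small_p_period p n T t" if t: "t \<in> car T" for t
  proof -
    obtain s where "s \<in> car S" "t = f s"
      using f t unfolding is_hom_onto_def by blast
    then show ?thesis
      using small_p_period_hom_image[OF S(1) _ f] S(2) by blast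
  qed
  then show "T \<in> Small_p_period p n"
    using \<open>T \<in> FinSG\<close> by (simp add: Small_p_period_def)
qed

lemma Zm_prime_power_in_pv_gen:
  assumes "prime p" "n \<ge> 1" "fin_sg T" "s \<in> car T" "\<not> small_p_period p n T s"
  shows "Zm (p ^ n) \<in> pv_gen {T}"
proof -
  obtain i r where "monogenic T s i r"
    using monogenic_exists[OF assms(3,4)] .
  then have "p ^ n dvd r"
    using monogenic.small_p_period_iff[OF _ assms(1,2)] assms(5) by blast
  then obtain A f where "A \<subseteq> car T" "A \<noteq> {}" "\<forall>x\<in>A. \<forall>y\<in>A. mul T x y \<in> A"
    "is_hom_onto f (A, mul T) (Zm (p ^ n))"
    using monogenic.hom_onto_Zm[OF \<open>monogenic T s i r\<close>] by blast
  then show ?thesis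
    using divisor_in_pv_gen Zm_in_FinSG assms(1) by (simp add: prime_gt_0_nat Suc_leI)
qed

lemma pv_thm_eq_eq_Small_p_period:
  assumes "prime p" "n \<ge> 1"
  shows "pv_thm_eq p n = Small_p_period p n"
proof -
  have "spow T (pi_omega_pow (primes_except p) T s) (p ^ (n - 1)) = omega_pow T s
      \<longleftrightarrow> small_p_period p n T s" if T: "fin_sg T" "s \<in> car T" for T s
  proof -
    obtain i r where "monogenic T s i r"
      using monogenic_exists[OF T] .
    then show ?thesis
      using monogenic.pseudoidentity_iff monogenic.small_p_period_iff assms by blast
  qed
  then show ?thesis
    unfolding pv_thm_eq_def Small_p_period_def FinSG_def by auto
qed

lemma Excl_Zm_prime_power:
  assumes "prime p" "n \<ge> 1"
  shows "Excl (Zm (p ^ n)) = Small_p_period p n"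
proof (rule Excl_eqI[OF pseudovariety_Small_p_period[OF assms(1)]])
  have "1 \<in> car (Zm (p ^ n))"
    using assms one_less_power[of p n] prime_gt_1_nat by (simp add: Zm_def car_def)
  then show "Zm (p ^ n) \<notin> Small_p_period p n"
    using Zm_prime_power_not_small_p_period[OF assms] unfolding Small_p_period_def by blast
next
  fix T assume "T \<in> FinSG" "T \<notin> Small_p_period p n"
  then obtain s where "fin_sg T" "s \<in> car T" "\<not> small_p_period p n T s"
    unfolding Small_p_period_def FinSG_def by blast
  then show "Zm (p ^ n) \<in> pv_gen {T}"
    by (rule Zm_prime_power_in_pv_gen[OF assms])
qed

theorem theorem5p3:
  fixes p n :: nat
  assumes "prime p" and "n \<ge> 1"
  shows "join_irreducible (pv_gen {Zm (p ^ n)})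
         \<and> Excl (Zm (p ^ n)) = pv_thm_eq p n"
  using join_irreducible_pv_gen pseudovariety_Small_p_period[OF assms(1)]
    Excl_Zm_prime_power[OF assms] pv_thm_eq_eq_Small_p_period[OF assms] by simp

end
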